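(* Let $n=2k$ and let $P\in\mathbb{H}_n$ be a rank-$k$ orthogonal projection. Then $S^{\mathbb{H}}(P)\cup(-S^{\mathbb{H}}(P))$ contains no two-dimensional real linear subspace of $\mathbb{H}_n$.
   Context: $\mathbb{H}_n$ is the real space of $n\times n$ Hermitian matrices. $w_k(A)=\max\{|\operatorname{tr}(AP)|: P=P^*=P^2,\operatorname{tr}P=k\}$. For a rank-$k$ orthogonal projection $P$, $S^{\mathbb{H}}(P)=\{B\in\mathbb{H}_n:\operatorname{tr}(BP)=w_k(B)\}$. *)

theory Defs
  imports "HOL-Analysis.Analysis"
begin

text \<open>Complex n x n matrices are represented as complex^'n^'n, with n = CARD('n).\<close>

definition cmat_adj :: "complex^'n^'n \<Rightarrow> complex^'n^'n" where
  "cmat_adj A = (\<chi> i j. cnj (A $ j $ i))"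

definition cmat_trace :: "complex^'n^'n \<Rightarrow> complex" where
  "cmat_trace A = (\<Sum>i\<in>UNIV. A $ i $ i)"

definition hermitian_mat :: "complex^'n^'n \<Rightarrow> bool" where
  "hermitian_mat A \<longleftrightarrow> cmat_adj A = A"

text \<open>Orthogonal projection P = P* = P^2 with tr P = k (equivalently, rank k).\<close>
definition orth_proj_k :: "nat \<Rightarrow> complex^'n^'n \<Rightarrow> bool" where
  "orth_proj_k k P \<longleftrightarrow> cmat_adj P = P \<and> P ** P = P \<and> cmat_trace P = of_nat k"

definition wk :: "nat \<Rightarrow> complex^'n^'n \<Rightarrow> real" where
  "wk k A = Sup {cmod (cmat_trace (A ** P)) | P. orth_proj_k k P}"

definition SH :: "nat \<Rightarrow> complex^'n^'n \<Rightarrow> (complex^'n^'n) set" where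
  "SH k P = {B. hermitian_mat B \<and> cmat_trace (B ** P) = complex_of_real (wk k B)}"

end

theory Submission
  imports Defs
begin

text \<open>
  The real-linear functional \<open>X \<mapsto> Re tr(XP)\<close> vanishes at some nonzero \<open>B\<close> of any
  two-dimensional subspace. If \<open>B\<close> or \<open>-B\<close> lies in \<open>S(P)\<close>, then \<open>w\<^sub>k(B) = \<plusminus>tr(BP)\<close> is
  real with vanishing real part, so \<open>tr(BQ) = 0\<close> for every rank-\<open>k\<close> projection \<open>Q\<close>. For
  \<open>0 < k < n\<close> this forces \<open>B = 0\<close>: coordinate projections make all diagonal entries equal
  with vanishing sums over \<open>k\<close>-sets, hence zero, and projections containing the unit vector
  \<open>(e\<^sub>i + z e\<^sub>j)/\<surd>2\<close> for \<open>z = 1, \<i>\<close> kill the off-diagonal entries.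
\<close>

definition outer_prod :: "complex^'n \<Rightarrow> complex^'n^'n" where
  "outer_prod u = (\<chi> a b. u$a * cnj (u$b))"

definition cinner :: "complex^'n \<Rightarrow> complex^'n \<Rightarrow> complex" where
  "cinner u v = (\<Sum>a\<in>UNIV. u$a * cnj (v$a))"

definition orthonormal :: "(complex^'n) set \<Rightarrow> bool" where
  "orthonormal U \<longleftrightarrow> (\<forall>u\<in>U. \<forall>v\<in>U. cinner u v = (if u = v then 1 else 0))"

definition qform :: "complex^'n^'n \<Rightarrow> complex^'n \<Rightarrow> complex" where
  "qform B u = (\<Sum>a\<in>UNIV. \<Sum>b\<in>UNIV. cnj (u$a) * B$a$b * u$b)"

lemma sum_outer_prod_nth: "(\<Sum>u\<in>U. outer_prod u) $ a $ b = (\<Sum>u\<in>U. u$a * cnj (u$b))"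
  by (simp add: outer_prod_def)

lemma orthonormal_insert:
  "orthonormal (insert v U) \<longleftrightarrow>
     orthonormal U \<and> cinner v v = 1 \<and> (\<forall>u\<in>U. u \<noteq> v \<longrightarrow> cinner u v = 0 \<and> cinner v u = 0)"
  unfolding orthonormal_def by auto

lemma orth_proj_k_sum_outer_prod:
  assumes "finite U" "orthonormal U" "card U = k"
  shows "orth_proj_k k (\<Sum>u\<in>U. outer_prod u)"
proof -
  define Q where "Q = (\<Sum>u\<in>U. outer_prod u)"
  have Q: "Q $ a $ b = (\<Sum>u\<in>U. u$a * cnj (u$b))" for a b
    unfolding Q_def by (rule sum_outer_prod_nth)
  have on: "cinner v u = (if v = u then 1 else 0)" if "u \<in> U" "v \<in> U" for u v
    using assms(2) that by (simp add: orthonormal_def)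
  have "(Q ** Q) $ a $ b = Q $ a $ b" for a b
  proof -
    have "(Q ** Q) $ a $ b = (\<Sum>l\<in>UNIV. \<Sum>v\<in>U. \<Sum>u\<in>U. u$a * cnj (v$b) * (v$l * cnj (u$l)))"
      by (simp add: matrix_matrix_mult_def Q sum_distrib_left sum_distrib_right mult_ac)
    also have "\<dots> = (\<Sum>v\<in>U. \<Sum>u\<in>U. u$a * cnj (v$b) * cinner v u)"
      by (simp add: cinner_def sum_distrib_left sum.swap[of _ UNIV])
    also have "\<dots> = (\<Sum>v\<in>U. \<Sum>u\<in>U. if u = v then v$a * cnj (v$b) else 0)"
      by (intro sum.cong refl) (simp add: on)
    also have "\<dots> = (\<Sum>v\<in>U. v$a * cnj (v$b))"
      using assms(1) by simp
    finally show ?thesis by (simp add: Q)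
  qed
  then have "Q ** Q = Q"
    by (simp add: vec_eq_iff)
  moreover have "cmat_adj Q = Q"
    by (simp add: cmat_adj_def vec_eq_iff Q cnj_sum mult.commute)
  moreover have "cmat_trace Q = (\<Sum>u\<in>U. cinner u u)"
    by (simp add: cmat_trace_def Q cinner_def sum.swap[of _ UNIV])
  then have "cmat_trace Q = of_nat k"
    using assms(3) by (simp add: on)
  ultimately show ?thesis
    by (simp add: orth_proj_k_def Q_def)
qed

lemma cmat_trace_mult_sum_outer_prod:
  "cmat_trace (B ** (\<Sum>u\<in>U. outer_prod u)) = (\<Sum>u\<in>U. qform B u)"
proof -
  have "cmat_trace (B ** (\<Sum>u\<in>U. outer_prod u))
      = (\<Sum>a\<in>UNIV. \<Sum>b\<in>UNIV. B$a$b * (\<Sum>u\<in>U. u$b * cnj (u$a)))"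
    by (simp add: cmat_trace_def matrix_matrix_mult_def outer_prod_def)
  then show ?thesis
    by (simp add: qform_def sum_distrib_left sum.swap[of _ U] mult_ac)
qed

lemma inj_on_axis_one: "inj_on (\<lambda>l. axis l (1::complex) :: complex^'n) L"
  by (simp add: inj_on_def axis_eq_axis)

lemma qform_axis_one: "qform B (axis l 1) = B$l$l"
  by (simp add: qform_def axis_def if_distrib[of cnj] if_distrib[of "\<lambda>y. y * _"]
      if_distrib[of "\<lambda>y. _ * y"] cong: if_cong)

lemma cinner_axis_one: "cinner (axis l 1 :: complex^'n) (axis m 1) = (if l = m then 1 else 0)"
  by (simp add: cinner_def axis_def if_distrib[of cnj] if_distrib[of "\<lambda>y. y * _"]
      if_distrib[of "\<lambda>y. _ * y"] cong: if_cong)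

lemma orthonormal_axis_one: "orthonormal ((\<lambda>l. axis l 1 :: complex^'n) ` L)"
  by (auto simp: orthonormal_def cinner_axis_one axis_eq_axis)

definition pair_vec :: "'n \<Rightarrow> 'n \<Rightarrow> complex \<Rightarrow> complex^'n" where
  "pair_vec i j z =
     (\<chi> c. complex_of_real (sqrt (1/2)) * (if c = i then 1 else if c = j then z else 0))"

lemma sum_UNIV_eq_two_support:
  fixes f :: "'n::finite \<Rightarrow> 'a::comm_monoid_add"
  assumes "i \<noteq> j" "\<And>c. c \<noteq> i \<Longrightarrow> c \<noteq> j \<Longrightarrow> f c = 0"
  shows "(\<Sum>c\<in>UNIV. f c) = f i + f j"
proof -
  have "(\<Sum>c\<in>UNIV. f c) = (\<Sum>c\<in>{i,j}. f c)"
    by (rule sum.mono_neutral_right) (use assms in auto)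
  then show ?thesis
    using assms(1) by simp
qed

lemma sqrt_half_sq: "complex_of_real (sqrt (1/2)) * complex_of_real (sqrt (1/2)) = 1/2"
  by (simp flip: of_real_mult)

lemma qform_pair_vec:
  assumes "i \<noteq> j"
  shows "qform B (pair_vec i j z) = (B$i$i + B$i$j * z + B$j$i * cnj z + B$j$j * (z * cnj z)) / 2"
proof -
  let ?s = "complex_of_real (sqrt (1/2))"
  have v: "pair_vec i j z $ c = ?s * (if c = i then 1 else if c = j then z else 0)" for c
    by (simp add: pair_vec_def)
  let ?v = "pair_vec i j z"
  have "qform B ?v
      = (\<Sum>b\<in>UNIV. cnj (?v$i) * B$i$b * ?v$b) + (\<Sum>b\<in>UNIV. cnj (?v$j) * B$j$b * ?v$b)"
    unfolding qform_def by (rule sum_UNIV_eq_two_support[OF assms]) (use assms in \<open>auto simp: v\<close>)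
  also have "\<dots> = (?s * ?s) * (B$i$i + B$i$j * z + B$j$i * cnj z + B$j$j * (z * cnj z))"
    by (subst (1 2) sum_UNIV_eq_two_support[OF assms]) (use assms in \<open>auto simp: v algebra_simps\<close>)
  finally show ?thesis
    by (simp add: sqrt_half_sq)
qed

lemma cinner_pair_vec_self:
  assumes "i \<noteq> j" "z * cnj z = 1"
  shows "cinner (pair_vec i j z) (pair_vec i j z) = 1"
proof -
  let ?s = "complex_of_real (sqrt (1/2))"
  have "cinner (pair_vec i j z) (pair_vec i j z) = (?s * ?s) * (1 + z * cnj z)"
    unfolding cinner_def
    by (subst sum_UNIV_eq_two_support[OF assms(1)])
      (use assms in \<open>auto simp: pair_vec_def algebra_simps\<close>)
  then show ?thesis
    using assms(2) by (simp add: sqrt_half_sq)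
qed

lemma cinner_axis_one_pair_vec:
  assumes "l \<noteq> i" "l \<noteq> j"
  shows "cinner (axis l 1) (pair_vec i j z) = 0" "cinner (pair_vec i j z) (axis l 1) = 0"
  using assms by (auto simp: cinner_def pair_vec_def axis_def intro!: sum.neutral)

lemma pair_vec_notin_axis_one_image:
  assumes "i \<notin> L"
  shows "pair_vec i j z \<notin> (\<lambda>l. axis l 1) ` L"
proof
  assume "pair_vec i j z \<in> (\<lambda>l. axis l 1) ` L"
  then obtain l where "l \<in> L" "pair_vec i j z $ i = axis l 1 $ i"
    by auto
  with assms show False
    by (auto simp: pair_vec_def axis_def split: if_splits)
qed

lemma trace_vanishing_diag_sum:
  assumes vanish: "\<And>Q. orth_proj_k k Q \<Longrightarrow> cmat_trace (B ** Q) = 0" and S: "card S = k"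
  shows "(\<Sum>l\<in>S. B$l$l) = 0"
proof -
  let ?U = "(\<lambda>l. axis l 1) ` S"
  note inj = inj_on_axis_one[of S]
  have "orth_proj_k k (\<Sum>u\<in>?U. outer_prod u)"
    using S inj by (intro orth_proj_k_sum_outer_prod) (simp_all add: orthonormal_axis_one card_image)
  then have "(\<Sum>u\<in>?U. qform B u) = 0"
    using vanish by (simp flip: cmat_trace_mult_sum_outer_prod)
  then show ?thesis
    by (simp add: sum.reindex[OF inj] qform_axis_one)
qed

lemma trace_vanishing_offdiag:
  assumes vanish: "\<And>Q. orth_proj_k k Q \<Longrightarrow> cmat_trace (B ** Q) = 0"
    and ij: "i \<noteq> j" and L: "Suc (card L) = k" "i \<notin> L" "j \<notin> L"
    and diag: "\<And>l. B$l$l = 0" and z: "z * cnj z = 1"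
  shows "B$i$j * z + B$j$i * cnj z = 0"
proof -
  let ?A = "(\<lambda>l. axis l 1) ` L"
  let ?U = "insert (pair_vec i j z) ?A"
  note inj = inj_on_axis_one[of L]
  have notin: "pair_vec i j z \<notin> ?A"
    using L(2) by (rule pair_vec_notin_axis_one_image)
  have "cinner (axis l 1) (pair_vec i j z) = 0 \<and> cinner (pair_vec i j z) (axis l 1) = 0"
    if "l \<in> L" for l
    using that L(2,3) by (metis cinner_axis_one_pair_vec)
  then have "orthonormal ?U"
    by (auto simp: orthonormal_insert orthonormal_axis_one cinner_pair_vec_self[OF ij z])
  moreover have "card ?U = k"
    using notin L(1) by (simp add: card_image[OF inj])
  ultimately have "orth_proj_k k (\<Sum>u\<in>?U. outer_prod u)"
    by (intro orth_proj_k_sum_outer_prod) simp_all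
  then have "(\<Sum>u\<in>?U. qform B u) = 0"
    using vanish by (simp flip: cmat_trace_mult_sum_outer_prod)
  then have "qform B (pair_vec i j z) = 0"
    using notin by (simp add: sum.reindex[OF inj] qform_axis_one diag)
  then show ?thesis
    using diag by (simp add: qform_pair_vec[OF ij])
qed

lemma obtain_subset_avoiding:
  fixes i j :: "'n::finite"
  assumes "0 < k" "k < CARD('n)"
  obtains L where "Suc (card L) = k" "i \<notin> L" "j \<notin> L"
proof -
  have "card {i, j} \<le> 2"
    by (simp add: card_insert_le_m1)
  then have "k - 1 \<le> card (UNIV - {i, j})"
    using assms by (simp add: card_Diff_subset)
  then obtain L where "L \<subseteq> UNIV - {i, j}" "card L = k - 1"
    by (rule obtain_subset_with_card_n)
  then show thesis
    using assms(1) that[of L] by auto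
qed

lemma trace_vanishing_imp_zero:
  fixes B :: "complex^'n^'n"
  assumes k: "0 < k" "k < CARD('n)"
    and vanish: "\<And>Q. orth_proj_k k Q \<Longrightarrow> cmat_trace (B ** Q) = 0"
  shows "B = 0"
proof -
  have diag_insert: "B$i$i + (\<Sum>l\<in>L. B$l$l) = 0" if "Suc (card L) = k" "i \<notin> L" for i L
    using trace_vanishing_diag_sum[OF vanish, where S = "insert i L"] that by simp
  have diag_const: "B$i$i = B$j$j" for i j
  proof -
    obtain L where L: "Suc (card L) = k" "i \<notin> L" "j \<notin> L"
      using obtain_subset_avoiding[OF k] .
    show ?thesis
      using diag_insert[OF L(1,2)] diag_insert[OF L(1,3)] by (metis add_right_cancel)
  qed
  have diag: "B$l$l = 0" for l
  proof -
    obtain L where L: "Suc (card L) = k" "l \<notin> L"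
      using obtain_subset_avoiding[OF k, of l l] by blast
    have "(\<Sum>m\<in>L. B$m$m) = (\<Sum>m\<in>L. B$l$l)"
      by (intro sum.cong refl diag_const)
    then have "of_nat k * B$l$l = 0"
      using diag_insert[OF L] by (simp add: algebra_simps flip: L(1))
    then show ?thesis
      using k(1) by simp
  qed
  have offdiag: "B$i$j = 0" if "i \<noteq> j" for i j
  proof -
    obtain L where L: "Suc (card L) = k" "i \<notin> L" "j \<notin> L"
      using obtain_subset_avoiding[OF k] .
    have "B$i$j + B$j$i = 0" "B$i$j * \<i> - B$j$i * \<i> = 0"
      using trace_vanishing_offdiag[OF vanish that L diag, of 1]
        trace_vanishing_offdiag[OF vanish that L diag, of \<i>] by simp_all
    then show ?thesis
      by (simp add: algebra_simps)
  qed
  show ?thesis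
    using diag offdiag by (metis vec_eq_iff zero_index)
qed

lemma linear_functional_vanishes_in_subspace:
  fixes f :: "'a::real_vector \<Rightarrow> real"
  assumes f: "linear f" and V: "subspace V" and dimV: "2 \<le> dim V"
  obtains x where "x \<in> V" "x \<noteq> 0" "f x = 0"
proof -
  obtain B where B: "B \<subseteq> V" "independent B" "card B = dim V"
    by (rule basis_exists)
  obtain b1 b2 where b: "b1 \<in> B" "b2 \<in> B" "b1 \<noteq> b2"
    using B(3) dimV by (metis card_2_iff' obtain_subset_with_card_n subset_iff)
  have "independent {b1, b2}"
    by (rule independent_mono[OF B(2)]) (use b in auto)
  then have b2: "b2 \<noteq> 0" and b1: "b1 \<notin> span {b2}"
    using b(3) by (auto simp: independent_insert dest: dependent_zero)
  show thesis
  proof (cases "f b2 = 0")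
    case True
    then show thesis using that b2 b B(1) by blast
  next
    case False
    define x where "x = b1 - (f b1 / f b2) *\<^sub>R b2"
    have "(f b1 / f b2) *\<^sub>R b2 \<in> span {b2}"
      by (simp add: span_base span_scale)
    then have "x \<noteq> 0"
      using b1 by (auto simp: x_def)
    moreover have "x \<in> V"
      unfolding x_def using V B(1) b by (auto intro: subspace_diff subspace_scale)
    moreover have "f x = 0"
      using False by (simp add: x_def linear_diff[OF f] linear_scale[OF f])
    ultimately show thesis using that by blast
  qed
qed

lemma cmat_trace_mult_add_left:
  "cmat_trace ((X + Y) ** P) = cmat_trace (X ** P) + cmat_trace (Y ** P)"
  by (simp add: cmat_trace_def matrix_matrix_mult_def sum.distrib distrib_right)

lemma cmat_trace_mult_scaleR_left: "cmat_trace ((r *\<^sub>R X) ** P) = r *\<^sub>R cmat_trace (X ** P)"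
  by (simp add: cmat_trace_def matrix_matrix_mult_def scaleR_sum_right)

lemma linear_Re_trace_mult_right: "linear (\<lambda>X. Re (cmat_trace (X ** P)))"
  by (rule linearI) (simp_all add: cmat_trace_mult_add_left cmat_trace_mult_scaleR_left)

lemma orth_proj_k_entry_norm_le:
  assumes "orth_proj_k k Q"
  shows "cmod (Q$a$b) \<le> sqrt k"
proof -
  have "complex_of_real (\<Sum>i\<in>UNIV. \<Sum>j\<in>UNIV. (cmod (Q$j$i))\<^sup>2)
      = cmat_trace (cmat_adj Q ** Q)"
    by (simp add: cmat_trace_def cmat_adj_def matrix_matrix_mult_def mult.commute
        flip: complex_norm_square)
  also have "\<dots> = complex_of_real (real k)"
    using assms by (simp add: orth_proj_k_def)
  finally have frobenius: "(\<Sum>i\<in>UNIV. \<Sum>j\<in>UNIV. (cmod (Q$j$i))\<^sup>2) = real k"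
    by (simp only: of_real_eq_iff)
  have "(cmod (Q$a$b))\<^sup>2 \<le> (\<Sum>j\<in>UNIV. (cmod (Q$j$b))\<^sup>2)"
    by (rule member_le_sum) auto
  also have "\<dots> \<le> (\<Sum>i\<in>UNIV. \<Sum>j\<in>UNIV. (cmod (Q$j$i))\<^sup>2)"
    by (rule member_le_sum) (auto intro: sum_nonneg)
  finally show ?thesis
    using frobenius by (simp add: real_le_rsqrt)
qed

lemma norm_trace_mult_le_wk:
  assumes "orth_proj_k k Q"
  shows "cmod (cmat_trace (B ** Q)) \<le> wk k B"
proof -
  have "cmod (cmat_trace (B ** R)) \<le> (\<Sum>i\<in>UNIV. \<Sum>j\<in>UNIV. cmod (B$i$j) * sqrt k)"
    if "orth_proj_k k R" for R
  proof -
    have "cmod (cmat_trace (B ** R)) \<le> (\<Sum>i\<in>UNIV. \<Sum>j\<in>UNIV. cmod (B$i$j * R$j$i))"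
      unfolding cmat_trace_def matrix_matrix_mult_def
      by (simp add: order_trans[OF norm_sum sum_mono[OF norm_sum]])
    also have "\<dots> \<le> (\<Sum>i\<in>UNIV. \<Sum>j\<in>UNIV. cmod (B$i$j) * sqrt k)"
      by (intro sum_mono) (simp add: norm_mult mult_left_mono orth_proj_k_entry_norm_le[OF that])
    finally show ?thesis .
  qed
  then show ?thesis
    unfolding wk_def by (intro cSup_upper) (use assms in \<open>auto simp: bdd_above_def\<close>)
qed

lemma wk_eq_0_imp_zero:
  assumes "0 < k" "k < CARD('n)" "wk k B = 0"
  shows "(B :: complex^'n^'n) = 0"
proof (rule trace_vanishing_imp_zero[OF assms(1,2)])
  fix Q :: "complex^'n^'n"
  assume "orth_proj_k k Q"
  then show "cmat_trace (B ** Q) = 0"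
    using norm_trace_mult_le_wk[of k Q B] assms(3) by simp
qed

lemma SH_Re_trace_eq_0_imp_zero:
  assumes "0 < k" "k < CARD('n)" "C \<in> SH k P" "Re (cmat_trace (C ** P)) = 0"
  shows "(C :: complex^'n^'n) = 0"
proof -
  have "cmat_trace (C ** P) = complex_of_real (wk k C)"
    using assms(3) by (simp add: SH_def)
  then have "wk k C = 0"
    using assms(4) by (metis Re_complex_of_real)
  with assms(1,2) show ?thesis
    by (rule wk_eq_0_imp_zero)
qed

theorem mainTheorem17:
  fixes P :: "complex^'n^'n" and k :: nat
  assumes "CARD('n) = 2 * k"
    and "orth_proj_k k P"
  shows "\<not> (\<exists>V. subspace V \<and> dim V = 2 \<and> V \<subseteq> SH k P \<union> uminus ` SH k P)"
proof
  assume "\<exists>V. subspace V \<and> dim V = 2 \<and> V \<subseteq> SH k P \<union> uminus ` SH k P"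
  then obtain V where V: "subspace V" "dim V = 2" and V_SH: "V \<subseteq> SH k P \<union> uminus ` SH k P"
    by blast
  have k: "0 < k" "k < CARD('n)"
    using assms(1) zero_less_card_finite[where 'a='n] by linarith+
  obtain B where B: "B \<in> V" "B \<noteq> 0" "Re (cmat_trace (B ** P)) = 0"
    using linear_functional_vanishes_in_subspace[OF linear_Re_trace_mult_right V(1)] V(2) by auto
  then obtain C where C: "C \<in> SH k P" "C = B \<or> C = - B"
    using V_SH by force
  have "Re (cmat_trace (C ** P)) = 0"
    using C(2) B(3) linear_neg[OF linear_Re_trace_mult_right[of P]] by auto
  then have "C = 0"
    using SH_Re_trace_eq_0_imp_zero[OF k C(1)] by blast
  with C(2) B(2) show False
    by auto
qed

end
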